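(* Let $\mathcal{L}=(\mathrm{Fm},\vdash)$ be a selfextensional logic for which $\neg_S$ and $\neg_A$ hold, and let $N\subseteq\mathrm{Fm}\times\mathrm{Fm}$ be a normative system closed under (SI). Then $$D_N=\{(\alpha,\varphi)\mid(\neg\alpha,\varphi)\notin N\}.$$
   Context: Logic $\mathcal{L}=(\mathrm{Fm},\vdash)$ with $\vdash$ a consequence relation; $Cn(\Gamma)=\{\psi\mid\Gamma\vdash\psi\}$, $Cn(\varphi,\psi)=Cn(\{\varphi,\psi\})$; $\varphi\vdash\psi$ means $\{\varphi\}\vdash\psi$. Selfextensional: interderivable formulas $\varphi,\psi$ yield interderivable $\delta(\varphi/p),\delta(\psi/p)$ for all $\delta$. $\neg_W$: a unary term $\neg$ with $\psi\in Cn(\varphi)\Rightarrow\neg\varphi\in Cn(\neg\psi)$; for such $\neg$: $\neg_A$: $Cn(\varphi,\neg\varphi)=\mathrm{Fm}$; $\neg_S$: $Cn(\varphi,\psi)=\mathrm{Fm}\Rightarrow\neg\psi\in Cn(\varphi)$. $N$ closed under (SI): $(\alpha,\varphi)\in N$ and $\beta\vdash\alpha$ imply $(\beta,\varphi)\in N$. Dual negative permission system: $D_N=\{(\alpha,\varphi)\mid\exists\beta((\beta,\varphi)\notin N\ \&\ Cn(\alpha,\beta)=\mathrm{Fm})\}$. *)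

theory Defs
  imports Main
begin

datatype ('v, 'c) fm = Var 'v | Op 'c "('v, 'c) fm list"

fun vars :: "('v, 'c) fm \<Rightarrow> 'v set" where
  "vars (Var v) = {v}"
| "vars (Op c ts) = (\<Union>t\<in>set ts. vars t)"

fun subst :: "('v \<Rightarrow> ('v, 'c) fm) \<Rightarrow> ('v, 'c) fm \<Rightarrow> ('v, 'c) fm" where
  "subst s (Var v) = s v"
| "subst s (Op c ts) = Op c (map (subst s) ts)"

definition subst1 :: "('v, 'c) fm \<Rightarrow> 'v \<Rightarrow> ('v, 'c) fm \<Rightarrow> ('v, 'c) fm" where
  "subst1 \<delta> p \<phi> = subst (Var(p := \<phi>)) \<delta>"

type_synonym ('v, 'c) cr = "('v, 'c) fm set \<Rightarrow> ('v, 'c) fm \<Rightarrow> bool"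

definition consequence_relation :: "('v, 'c) cr \<Rightarrow> bool" where
  "consequence_relation der \<longleftrightarrow>
     (\<forall>\<Gamma> \<phi>. \<phi> \<in> \<Gamma> \<longrightarrow> der \<Gamma> \<phi>) \<and>
     (\<forall>\<Gamma> \<Delta> \<phi>. der \<Gamma> \<phi> \<and> \<Gamma> \<subseteq> \<Delta> \<longrightarrow> der \<Delta> \<phi>) \<and>
     (\<forall>\<Gamma> \<Delta> \<phi>. (\<forall>\<psi>\<in>\<Delta>. der \<Gamma> \<psi>) \<and> der \<Delta> \<phi> \<longrightarrow> der \<Gamma> \<phi>)"

definition Cn :: "('v, 'c) cr \<Rightarrow> ('v, 'c) fm set \<Rightarrow> ('v, 'c) fm set" where
  "Cn der \<Gamma> = {\<psi>. der \<Gamma> \<psi>}"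

definition selfextensional :: "('v, 'c) cr \<Rightarrow> bool" where
  "selfextensional der \<longleftrightarrow>
     (\<forall>\<phi> \<psi> \<delta> p. der {\<phi>} \<psi> \<and> der {\<psi>} \<phi> \<longrightarrow>
        der {subst1 \<delta> p \<phi>} (subst1 \<delta> p \<psi>) \<and> der {subst1 \<delta> p \<psi>} (subst1 \<delta> p \<phi>))"

text \<open>A unary term neg in the variable p: vars t \<subseteq> {p}; neg phi = t(phi/p).\<close>
definition unary_term :: "('v, 'c) fm \<Rightarrow> 'v \<Rightarrow> bool" where
  "unary_term t p \<longleftrightarrow> vars t \<subseteq> {p}"

definition neg_W :: "('v, 'c) cr \<Rightarrow> ('v, 'c) fm \<Rightarrow> 'v \<Rightarrow> bool" where
  "neg_W der t p \<longleftrightarrow> unary_term t p \<and>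
     (\<forall>\<phi> \<psi>. \<psi> \<in> Cn der {\<phi>} \<longrightarrow> subst1 t p \<phi> \<in> Cn der {subst1 t p \<psi>})"

definition neg_A :: "('v, 'c) cr \<Rightarrow> ('v, 'c) fm \<Rightarrow> 'v \<Rightarrow> bool" where
  "neg_A der t p \<longleftrightarrow> (\<forall>\<phi>. Cn der {\<phi>, subst1 t p \<phi>} = UNIV)"

definition neg_S :: "('v, 'c) cr \<Rightarrow> ('v, 'c) fm \<Rightarrow> 'v \<Rightarrow> bool" where
  "neg_S der t p \<longleftrightarrow>
     (\<forall>\<phi> \<psi>. Cn der {\<phi>, \<psi>} = UNIV \<longrightarrow> subst1 t p \<psi> \<in> Cn der {\<phi>})"

definition closed_SI :: "('v, 'c) cr \<Rightarrow> (('v, 'c) fm \<times> ('v, 'c) fm) set \<Rightarrow> bool" where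
  "closed_SI der N \<longleftrightarrow> (\<forall>\<alpha> \<beta> \<phi>. (\<alpha>, \<phi>) \<in> N \<and> der {\<beta>} \<alpha> \<longrightarrow> (\<beta>, \<phi>) \<in> N)"

definition dual_neg_perm :: "('v, 'c) cr \<Rightarrow> (('v, 'c) fm \<times> ('v, 'c) fm) set
    \<Rightarrow> (('v, 'c) fm \<times> ('v, 'c) fm) set" where
  "dual_neg_perm der N =
     {(\<alpha>, \<phi>). \<exists>\<beta>. (\<beta>, \<phi>) \<notin> N \<and> Cn der {\<alpha>, \<beta>} = UNIV}"

end

theory Submission
  imports Defs
begin

(* If Cn(alpha, beta) = Fm then beta |- neg alpha by neg_S, so (SI) carries (beta, phi) \<notin> N
   over to (neg alpha, phi) \<notin> N; conversely neg alpha itself is a witness beta by neg_A. *)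

lemma dual_neg_perm_subset_neg_not_in:
  assumes "neg_S der t p" and "closed_SI der N"
  shows "dual_neg_perm der N \<subseteq> {(\<alpha>, \<phi>). (subst1 t p \<alpha>, \<phi>) \<notin> N}"
proof clarify
  fix \<alpha> \<phi>
  assume "(\<alpha>, \<phi>) \<in> dual_neg_perm der N" and neg_in_N: "(subst1 t p \<alpha>, \<phi>) \<in> N"
  then obtain \<beta> where \<beta>_not_in_N: "(\<beta>, \<phi>) \<notin> N" and "Cn der {\<beta>, \<alpha>} = UNIV"
    unfolding dual_neg_perm_def by (auto simp: insert_commute)
  then have "der {\<beta>} (subst1 t p \<alpha>)"
    using assms(1) unfolding neg_S_def Cn_def by blast
  with neg_in_N have "(\<beta>, \<phi>) \<in> N"
    using assms(2) unfolding closed_SI_def by blast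
  with \<beta>_not_in_N show False ..
qed

lemma neg_not_in_subset_dual_neg_perm:
  assumes "neg_A der t p"
  shows "{(\<alpha>, \<phi>). (subst1 t p \<alpha>, \<phi>) \<notin> N} \<subseteq> dual_neg_perm der N"
  using assms unfolding neg_A_def dual_neg_perm_def by blast

theorem proposition4p7:
  fixes der :: "('v, 'c) cr" and t :: "('v, 'c) fm" and p :: 'v
    and N :: "(('v, 'c) fm \<times> ('v, 'c) fm) set"
  assumes "consequence_relation der"
    and "selfextensional der"
    and "neg_W der t p" and "neg_S der t p" and "neg_A der t p"
    and "closed_SI der N"
  shows "dual_neg_perm der N = {(\<alpha>, \<phi>). (subst1 t p \<alpha>, \<phi>) \<notin> N}"
  using dual_neg_perm_subset_neg_not_in[OF assms(4,6)]
    neg_not_in_subset_dual_neg_perm[OF assms(5)]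
  by (rule equalityI)

end
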